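(* Let $q$ be a prime power and $t\ge1$ an integer. In a projective space over $\mathbb{F}_q$, let $\Omega$ be a $(t-2)$-dimensional subspace, $\Gamma$ a plane skew from $\Omega$, $\bar{B}$ a non-trivial minimal blocking set of $\Gamma$, and $K$ the cone with vertex $\Omega$ and base $\bar{B}$. Then every point $P$ of $K$ not contained in $\Omega$ lies on exactly $(q^{t-1}-1)/(q-1)$ lines contained in $K$.
   Context: The cone with vertex $\Omega$ and base $\bar{B}$ is $\bigcup_{P\in\bar B}\langle P,\Omega\rangle$. A blocking set of a plane is a point set meeting every line; minimal means no proper subset does; non-trivial means it does not contain a line. *)

theory Defs
  imports "HOL-Analysis.Analysis"
begin

text \<open>A projective subspace of projective dimension d is a linear subspace of
  vector dimension d+1; points are 1-dimensional, lines 2-dimensional,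
  planes 3-dimensional linear subspaces.\<close>

definition psub :: "('k::field ^ 'n) set \<Rightarrow> nat \<Rightarrow> bool" where
  "psub W d \<longleftrightarrow> vec.subspace W \<and> vec.dim W = d"

definition is_point :: "('k::field ^ 'n) set \<Rightarrow> bool" where
  "is_point P \<longleftrightarrow> psub P 1"

definition is_line :: "('k::field ^ 'n) set \<Rightarrow> bool" where
  "is_line L \<longleftrightarrow> psub L 2"

definition points_of :: "('k::field ^ 'n) set \<Rightarrow> ('k ^ 'n) set set" where
  "points_of W = {P. is_point P \<and> P \<subseteq> W}"

definition blocking_set :: "('k::field ^ 'n) set \<Rightarrow> ('k ^ 'n) set set \<Rightarrow> bool" where
  "blocking_set Gam B \<longleftrightarrow> B \<subseteq> points_of Gam \<and>
     (\<forall>L. is_line L \<and> L \<subseteq> Gam \<longrightarrow> (\<exists>P\<in>B. P \<subseteq> L))"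

definition minimal_blocking_set :: "('k::field ^ 'n) set \<Rightarrow> ('k ^ 'n) set set \<Rightarrow> bool" where
  "minimal_blocking_set Gam B \<longleftrightarrow> blocking_set Gam B \<and>
     (\<forall>B'. B' \<subset> B \<longrightarrow> \<not> blocking_set Gam B')"

definition nontrivial_blocking_set :: "('k::field ^ 'n) set \<Rightarrow> ('k ^ 'n) set set \<Rightarrow> bool" where
  "nontrivial_blocking_set Gam B \<longleftrightarrow> blocking_set Gam B \<and>
     \<not> (\<exists>L. is_line L \<and> L \<subseteq> Gam \<and> points_of L \<subseteq> B)"

definition proj_cone :: "('k::field ^ 'n) set \<Rightarrow> ('k ^ 'n) set set \<Rightarrow> ('k ^ 'n) set set" where
  "proj_cone Omega B = (\<Union>P\<in>B. points_of (vec.span (P \<union> Omega)))"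

end

theory Submission
  imports Defs
begin

text \<open>A line through the point P of the cone K that is not contained in the subspace
  \<langle>P,\<Omega>\<rangle> would be mapped, by projection from \<Omega> onto \<Gamma>, onto a line of \<Gamma> all of whose
  points belong to B: each point of the line has a unique \<Gamma>-component, and that component
  lies in B because the point lies in K. A non-trivial blocking set contains no line, so
  the lines through P in K are exactly the lines through P in \<langle>P,\<Omega>\<rangle>. These correspond
  bijectively, via L \<mapsto> L \<inter> \<Omega>, to the (q^(t-1) - 1)/(q - 1) points of \<Omega>.\<close>

lemma is_point_span_singleton: "(v::'k::field^'n) \<noteq> 0 \<Longrightarrow> is_point (vec.span {v})"
  by (simp add: is_point_def psub_def)

lemma is_pointE:
  assumes "is_point (R::('k::field^'n) set)"
  obtains r where "r \<noteq> 0" "R = vec.span {r}"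
proof -
  obtain S where S: "S \<subseteq> R" "vec.independent S" "R \<subseteq> vec.span S" "card S = 1"
    using vec.basis_exists[of R] assms by (auto simp: is_point_def psub_def)
  then obtain r where "S = {r}" by (auto simp: card_1_singleton_iff)
  with S assms show thesis
    by (intro that[of r]) (auto simp: is_point_def psub_def vec.span_subspace)
qed

lemma is_point_eq_span:
  assumes "is_point (R::('k::field^'n) set)" "x \<in> R" "x \<noteq> 0"
  shows "R = vec.span {x}"
  using assms vec.subspace_dim_equal[of "vec.span {x}" R] vec.span_minimal[of "{x}" R]
  by (simp add: is_point_def psub_def)

lemma is_line_span_pair:
  assumes "(b::'k::field^'n) \<noteq> 0" "a \<notin> vec.span {b}"
  shows "is_line (vec.span {a, b})"
proof -
  have "a \<noteq> b" using assms vec.span_base by blast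
  moreover have "vec.independent {a, b}" using assms by (simp add: vec.independent_insert)
  ultimately show ?thesis
    by (simp add: is_line_def psub_def vec.dim_eq_card_independent)
qed

lemma in_span_pairE:
  assumes "r \<in> vec.span {a, b::'k::field^'n}"
  obtains c d where "r = c *s a + d *s b"
  using assms by (auto simp: vec.span_insert vec.span_singleton) (metis diff_add_cancel add.commute)

lemma scale_in_subspace_iff:
  assumes "vec.subspace S" "c \<noteq> 0"
  shows "c *s (x::'k::field^'n) \<in> S \<longleftrightarrow> x \<in> S"
  using assms vec.subspace_scale[of S "c *s x" "inverse c"] vec.subspace_scale[of S x c]
  by (auto simp: vec.scale_scale)

lemma card_span_independent:
  fixes S :: "('k::{field,finite}^'n) set"
  shows "vec.independent S \<Longrightarrow> card (vec.span S) = CARD('k) ^ card S"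
proof (induction S rule: finite_induct[OF finite])
  case 1
  then show ?case by simp
next
  case (2 a S)
  then have ind: "vec.independent S" and a: "a \<notin> vec.span S"
    by (auto simp: vec.independent_insert)
  let ?f = "\<lambda>(c, y). c *s a + y"
  have "vec.span (insert a S) = ?f ` (UNIV \<times> vec.span S)"
  proof (intro equalityI subsetI)
    fix x assume "x \<in> vec.span (insert a S)"
    then obtain k where "x - k *s a \<in> vec.span S" by (auto simp: vec.span_insert)
    then show "x \<in> ?f ` (UNIV \<times> vec.span S)" by (intro image_eqI[of _ _ "(k, x - k *s a)"]) auto
  next
    fix x assume "x \<in> ?f ` (UNIV \<times> vec.span S)"
    then obtain c y where "x = c *s a + y" "y \<in> vec.span S" by auto
    then have "x - c *s a \<in> vec.span S" by simp
    then show "x \<in> vec.span (insert a S)" unfolding vec.span_insert by blast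
  qed
  moreover have "inj_on ?f (UNIV \<times> vec.span S)"
  proof (rule inj_onI, clarify)
    fix c y c' y' assume y: "y \<in> vec.span S" "y' \<in> vec.span S" and eq: "c *s a + y = c' *s a + y'"
    have "(c - c') *s a = y' - y" using eq by (simp add: vec.scale_left_diff_distrib algebra_simps)
    then have "(c - c') *s a \<in> vec.span S" using y vec.span_diff by metis
    then have "c = c'" using a scale_in_subspace_iff[OF vec.subspace_span, of "c - c'"] by auto
    with eq show "c = c' \<and> y = y'" by simp
  qed
  ultimately show ?case using 2 ind by (simp add: card_image card_cartesian_product)
qed

lemma card_subspace:
  fixes W :: "('k::{field,finite}^'n) set"
  assumes "vec.subspace W"
  shows "card W = CARD('k) ^ vec.dim W"
proof -
  obtain S where "S \<subseteq> W" "vec.independent S" "W \<subseteq> vec.span S" "card S = vec.dim W"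
    using vec.basis_exists by blast
  with assms show ?thesis using card_span_independent by (metis vec.span_subspace)
qed

lemma card_nonzero_eq_card_points_of:
  fixes W :: "('k::{field,finite}^'n) set"
  assumes W: "vec.subspace W"
  shows "card (W - {0}) = card (points_of W) * (CARD('k) - 1)"
proof -
  have cover: "vec.span {x} \<in> points_of W \<and> x \<in> vec.span {x}" if "x \<in> W" "x \<noteq> 0" for x
    using that W is_point_span_singleton vec.span_minimal[of "{x}" W]
    by (simp add: points_of_def vec.span_base)
  have disjoint: "(R - {0}) \<inter> (R' - {0}) = {}"
    if "R \<in> points_of W" "R' \<in> points_of W" "R \<noteq> R'" for R R'
  proof -
    have "is_point R" "is_point R'" using that by (auto simp: points_of_def)
    then have "R = R'" if "x \<in> R" "x \<in> R'" "x \<noteq> 0" for x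
      using that is_point_eq_span[of R x] is_point_eq_span[of R' x] by simp
    with \<open>R \<noteq> R'\<close> show ?thesis by blast
  qed
  have "W - {0} = (\<Union>R\<in>points_of W. R - {0})"
    using cover by (auto simp: points_of_def)
  then have "card (W - {0}) = card (\<Union>R\<in>points_of W. R - {0})" by (simp only:)
  also have "\<dots> = (\<Sum>R\<in>points_of W. card (R - {0}))"
    by (rule card_UN_disjoint) (use disjoint in auto)
  also have "\<dots> = (\<Sum>R\<in>points_of W. CARD('k) - 1)"
  proof (rule sum.cong)
    fix R assume "R \<in> points_of W"
    then have "vec.subspace R" "vec.dim R = 1" by (auto simp: points_of_def is_point_def psub_def)
    then show "card (R - {0}) = CARD('k) - 1" using card_subspace[of R] by (simp add: vec.subspace_0)
  qed simp
  finally show ?thesis by simp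
qed

lemma card_points_of:
  fixes W :: "('k::{field,finite}^'n) set"
  assumes "vec.subspace W"
  shows "card (points_of W) = (CARD('k) ^ vec.dim W - 1) div (CARD('k) - 1)"
proof -
  have "card {0, 1::'k} \<le> CARD('k)" by (rule card_mono) auto
  then have "CARD('k) - 1 \<noteq> 0" by simp
  moreover have "card (W - {0}) = CARD('k) ^ vec.dim W - 1"
    using assms card_subspace[OF assms] by (simp add: vec.subspace_0)
  ultimately show ?thesis
    using card_nonzero_eq_card_points_of[OF assms] by (metis nonzero_mult_div_cancel_right)
qed

lemma span_insert_span: "vec.span (insert a (vec.span S)) = vec.span (insert a S)"
  by (simp add: vec.span_eq vec.span_superset insert_subset vec.span_base subset_iff
      vec.span_mono[of S "insert a S", THEN subsetD])

lemma span_insert_Int_subspace: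
  fixes Om :: "('k::field^'n) set"
  assumes "vec.subspace Om" "p \<notin> Om" "vec.subspace R" "R \<subseteq> Om"
  shows "vec.span (insert p R) \<inter> Om = R"
proof (intro equalityI subsetI)
  fix y assume y: "y \<in> vec.span (insert p R) \<inter> Om"
  then obtain k where k: "y - k *s p \<in> R"
    using vec.span_insert[of p R] vec.span_eq_iff[THEN iffD2, OF assms(3)] by auto
  then have "k *s p \<in> Om"
    using y assms(1,4) vec.subspace_diff[of Om y "y - k *s p"] by auto
  then have "k = 0" using assms(1,2) scale_in_subspace_iff by blast
  with k show "y \<in> R" by simp
qed (use assms in \<open>auto intro: vec.span_base\<close>)

lemma card_lines_through_in_join:
  fixes Om :: "('k::{field,finite}^'n) set"
  assumes Om: "vec.subspace Om" and p: "p \<notin> Om"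
  shows "card {L. is_line L \<and> p \<in> L \<and> L \<subseteq> vec.span (insert p Om)} = card (points_of Om)"
proof -
  let ?lines = "{L. is_line L \<and> p \<in> L \<and> L \<subseteq> vec.span (insert p Om)}"
  let ?join = "\<lambda>R. vec.span (insert p R)"
  have p0: "p \<noteq> 0" using Om p vec.subspace_0 by blast
  have join_point: "?join R \<in> ?lines \<and> ?join R \<inter> Om = R" if R: "R \<in> points_of Om" for R
  proof -
    obtain r where r: "r \<noteq> 0" "R = vec.span {r}"
      using R by (auto simp: points_of_def elim: is_pointE)
    have RO: "R \<subseteq> Om" and Rs: "vec.subspace R"
      using R by (auto simp: points_of_def is_point_def psub_def)
    then have "p \<notin> vec.span {r}" using r p by blast
    then have "is_line (?join R)" using is_line_span_pair[OF r(1)] span_insert_span[of p "{r}"] r(2) by simp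
    moreover have "?join R \<subseteq> vec.span (insert p Om)" using RO by (intro vec.span_mono) auto
    ultimately show ?thesis
      using span_insert_Int_subspace[OF Om p Rs RO] by (auto intro: vec.span_base)
  qed
  have meet_line: "L \<inter> Om \<in> points_of Om \<and> ?join (L \<inter> Om) = L" if L: "L \<in> ?lines" for L
  proof -
    have Ls: "vec.subspace L" and Ld: "vec.dim L = 2" and pL: "p \<in> L"
      and LJ: "L \<subseteq> vec.span (insert p Om)" using L by (auto simp: is_line_def psub_def)
    obtain x where xL: "x \<in> L" and xp: "x \<notin> vec.span {p}"
      using vec.dim_subset[of L "vec.span {p}"] Ld p0 by fastforce
    obtain k where "x - k *s p \<in> Om"
      using LJ xL vec.span_insert[of p Om] vec.span_eq_iff[THEN iffD2, OF Om] by auto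
    define w where "w = x - k *s p"
    have wO: "w \<in> Om" and wL: "w \<in> L"
      using \<open>x - k *s p \<in> Om\<close> Ls xL pL by (auto simp: w_def vec.subspace_diff vec.subspace_scale)
    have w0: "w \<noteq> 0" using xp by (auto simp: w_def vec.span_singleton)
    have wspan: "vec.span {w} \<subseteq> Om" using Om wO vec.span_minimal by blast
    have "?join (vec.span {w}) = L"
    proof (rule vec.subspace_dim_equal)
      show "?join (vec.span {w}) \<subseteq> L"
        using Ls pL wL vec.span_minimal[of "{w}" L] vec.span_minimal[of "insert p (vec.span {w})" L]
        by blast
      have "is_line (?join (vec.span {w}))"
        using is_line_span_pair[OF w0] span_insert_span[of p "{w}"] wspan p by auto
      then show "vec.dim L \<le> vec.dim (?join (vec.span {w}))" using Ld by (simp add: is_line_def psub_def)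
    qed (use Ls in auto)
    moreover have "L \<inter> Om = vec.span {w}"
      using span_insert_Int_subspace[OF Om p _ wspan] calculation by simp
    ultimately show ?thesis using is_point_span_singleton[OF w0] wspan by (simp add: points_of_def)
  qed
  have "bij_betw (\<lambda>L. L \<inter> Om) ?lines (points_of Om)"
    by (rule bij_betw_byWitness[where f'="?join"]) (use join_point meet_line in auto)
  then show ?thesis by (rule bij_betw_same_card)
qed

lemma proj_cone_pointE:
  fixes Omega :: "('k::field^'n) set"
  assumes "vec.subspace Omega" "\<And>Q. Q \<in> B \<Longrightarrow> vec.subspace Q"
    and "vec.span {v} \<in> proj_cone Omega B"
  obtains Q g w where "Q \<in> B" "g \<in> Q" "w \<in> Omega" "v = g + w"
proof -
  obtain Q where Q: "Q \<in> B" "vec.span {v} \<in> points_of (vec.span (Q \<union> Omega))"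
    using assms(3) unfolding proj_cone_def by blast
  then have "v \<in> vec.span (Q \<union> Omega)"
    using vec.span_base[of v "{v}"] by (auto simp: points_of_def)
  then obtain g w where "v = g + w" "g \<in> vec.span Q" "w \<in> vec.span Omega"
    unfolding vec.span_Un by blast
  moreover have "vec.span Q = Q" "vec.span Omega = Omega"
    using vec.span_eq_iff assms(1) assms(2)[OF Q(1)] by blast+
  ultimately show thesis using that Q(1) by simp
qed

lemma add_eq_add_imp_eq_if_Int_zero:
  fixes A C :: "('k::field^'n) set"
  assumes "vec.subspace A" "vec.subspace C" "A \<inter> C = {0}"
    and "a \<in> A" "a' \<in> A" "c \<in> C" "c' \<in> C" "a + c = a' + c'"
  shows "a = a'"
proof -
  have "a - a' = c' - c" using assms(8) by (simp add: algebra_simps)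
  moreover have "a - a' \<in> A" using assms(1,4,5) by (rule vec.subspace_diff)
  moreover have "c' - c \<in> C" using assms(2,7,6) by (rule vec.subspace_diff)
  ultimately have "a - a' \<in> A \<inter> C" by simp
  with assms(3) show ?thesis by simp
qed

lemma lincomb_in_subspace_imp_zero:
  fixes Om :: "('k::field^'n) set"
  assumes Om: "vec.subspace Om" and p: "p \<notin> Om" and x: "x \<notin> vec.span (insert p Om)"
    and comb: "a *s p + b *s x \<in> Om"
  shows "a = 0 \<and> b = 0"
proof -
  have "a *s p + b *s x \<in> vec.span (insert p Om)" using comb by (simp add: vec.span_base)
  moreover have "a *s p \<in> vec.span (insert p Om)" by (simp add: vec.span_base vec.span_scale)
  ultimately have "(a *s p + b *s x) - a *s p \<in> vec.span (insert p Om)" by (rule vec.span_diff)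
  then have "b = 0" using x scale_in_subspace_iff[OF vec.subspace_span] by auto
  with comb have "a *s p \<in> Om" by simp
  then have "a = 0" using Om p scale_in_subspace_iff by blast
  with \<open>b = 0\<close> show ?thesis by simp
qed

lemma proj_cone_line_outside_join:
  fixes Om Gam :: "('k::field^'n) set"
  assumes Om: "vec.subspace Om" and Gam: "vec.subspace Gam" and OmGam: "Om \<inter> Gam = {0}"
    and B: "B \<subseteq> points_of Gam"
    and L: "is_line L" "points_of L \<subseteq> proj_cone Om B"
    and p: "p \<in> L" "p \<notin> Om" and x: "x \<in> L" "x \<notin> vec.span (insert p Om)"
  obtains M where "is_line M" "M \<subseteq> Gam" "points_of M \<subseteq> B"
proof -
  have BQ: "is_point Q" "Q \<subseteq> Gam" if "Q \<in> B" for Q using B that by (auto simp: points_of_def)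
  have Bs: "vec.subspace Q" if "Q \<in> B" for Q using BQ(1)[OF that] by (simp add: is_point_def psub_def)
  have Ls: "vec.subspace L" using L(1) by (simp add: is_line_def psub_def)
  have GOm: "Gam \<inter> Om = {0}" using OmGam by blast
  have decompose: "\<exists>Q g w. Q \<in> B \<and> g \<in> Q \<and> w \<in> Om \<and> v = g + w" if "v \<in> L" "v \<noteq> 0" for v
  proof -
    have "vec.span {v} \<subseteq> L" using Ls that(1) vec.span_minimal[of "{v}" L] by simp
    then have "vec.span {v} \<in> points_of L"
      using is_point_span_singleton[OF that(2)] by (simp add: points_of_def)
    then have "vec.span {v} \<in> proj_cone Om B" using L(2) by blast
    then show ?thesis using proj_cone_pointE[OF Om Bs] by metis
  qed
  have p0: "p \<noteq> 0" using p(2) vec.subspace_0[OF Om] by blast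
  have x0: "x \<noteq> 0" using x(2) vec.span_zero by blast
  obtain gp wp Qp where gp: "Qp \<in> B" "gp \<in> Qp" "wp \<in> Om" "p = gp + wp"
    using decompose[OF p(1) p0] by blast
  obtain gx wx Qx where gx: "Qx \<in> B" "gx \<in> Qx" "wx \<in> Om" "x = gx + wx"
    using decompose[OF x(1) x0] by blast
  have gpx: "gp \<in> Gam" "gx \<in> Gam" using gp gx BQ by auto
  have split: "c *s p + d *s x = (c *s gp + d *s gx) + (c *s wp + d *s wx)" for c d
    unfolding gp(4) gx(4) by (simp add: vec.scale_right_distrib)
  have w: "c *s wp + d *s wx \<in> Om" for c d
    using Om gp(3) gx(3) by (simp add: vec.subspace_add vec.subspace_scale)
  have indep: "c = 0 \<and> d = 0" if "c *s gp + d *s gx = 0" for c d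
  proof (rule lincomb_in_subspace_imp_zero[OF Om p(2) x(2)])
    show "c *s p + d *s x \<in> Om" using split[of c d] w[of c d] that by simp
  qed
  have "gx \<noteq> 0" using indep[of 0 1] by auto
  moreover have "gp \<notin> vec.span {gx}"
  proof
    assume "gp \<in> vec.span {gx}"
    then obtain k where "gp = k *s gx" by (auto simp: vec.span_singleton)
    then show False using indep[of 1 "- k"] by simp
  qed
  ultimately have M: "is_line (vec.span {gp, gx})" by (rule is_line_span_pair)
  have MGam: "vec.span {gp, gx} \<subseteq> Gam" using gpx Gam vec.span_minimal[of "{gp, gx}" Gam] by simp
  have "R \<in> B" if R: "R \<in> points_of (vec.span {gp, gx})" for R
  proof -
    obtain r where r: "r \<noteq> 0" "R = vec.span {r}" using R by (auto simp: points_of_def elim: is_pointE)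
    have rM: "r \<in> vec.span {gp, gx}" using R r(2) vec.span_base[of r "{r}"] by (auto simp: points_of_def)
    then obtain c d where cd: "r = c *s gp + d *s gx" by (rule in_span_pairE)
    have rGam: "r \<in> Gam" using rM MGam by blast
    have v: "c *s p + d *s x = r + (c *s wp + d *s wx)" using split cd by simp
    have "c *s p + d *s x \<in> L" using Ls p(1) x(1) by (simp add: vec.subspace_add vec.subspace_scale)
    moreover have "c *s p + d *s x \<noteq> 0"
    proof
      assume "c *s p + d *s x = 0"
      then have "r + (c *s wp + d *s wx) = 0 + 0" using v by simp
      with add_eq_add_imp_eq_if_Int_zero[OF Gam Om GOm rGam vec.subspace_0[OF Gam] w vec.subspace_0[OF Om]]
      show False using r(1) by simp
    qed
    ultimately obtain Q g w' where Q: "Q \<in> B" "g \<in> Q" "w' \<in> Om" "c *s p + d *s x = g + w'"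
      using decompose by blast
    have "r = g"
      using add_eq_add_imp_eq_if_Int_zero[OF Gam Om GOm rGam _ w Q(3)] BQ(2)[OF Q(1)] Q(2,4) v by auto
    then have "Q = R" using is_point_eq_span[OF BQ(1)[OF Q(1)] Q(2)] r by simp
    with Q(1) show "R \<in> B" by simp
  qed
  with M MGam show thesis by (intro that) auto
qed

lemma line_in_proj_cone_iff:
  fixes Om Gam :: "('k::field^'n) set"
  assumes Om: "vec.subspace Om" and Gam: "vec.subspace Gam" and OmGam: "Om \<inter> Gam = {0}"
    and B: "B \<subseteq> points_of Gam"
    and no_line: "\<not> (\<exists>M. is_line M \<and> M \<subseteq> Gam \<and> points_of M \<subseteq> B)"
    and p: "Q \<in> B" "p \<in> vec.span (Q \<union> Om)" "p \<notin> Om"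
    and L: "is_line L" "p \<in> L"
  shows "points_of L \<subseteq> proj_cone Om B \<longleftrightarrow> L \<subseteq> vec.span (insert p Om)"
proof
  assume LK: "points_of L \<subseteq> proj_cone Om B"
  show "L \<subseteq> vec.span (insert p Om)"
  proof
    fix x assume "x \<in> L"
    show "x \<in> vec.span (insert p Om)"
    proof (rule ccontr)
      assume "x \<notin> vec.span (insert p Om)"
      then obtain M where "is_line M" "M \<subseteq> Gam" "points_of M \<subseteq> B"
        using proj_cone_line_outside_join[OF Om Gam OmGam B L(1) LK L(2) p(3) \<open>x \<in> L\<close>] by blast
      with no_line show False by blast
    qed
  qed
next
  assume "L \<subseteq> vec.span (insert p Om)"
  moreover have "vec.span (insert p Om) \<subseteq> vec.span (Q \<union> Om)"
    using p(2) vec.span_minimal[of "insert p Om" "vec.span (Q \<union> Om)"] vec.span_superset[of "Q \<union> Om"]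
    by auto
  ultimately have "points_of L \<subseteq> points_of (vec.span (Q \<union> Om))"
    by (auto simp: points_of_def)
  also have "\<dots> \<subseteq> proj_cone Om B"
    unfolding proj_cone_def using p(1) by (rule UN_upper)
  finally show "points_of L \<subseteq> proj_cone Om B" .
qed

theorem lemma5p9:
  fixes Omega Gam :: "('k::{field,finite} ^ 'n) set"
    and B :: "('k ^ 'n) set set"
    and t :: nat
  assumes "t \<ge> 1"
    and "psub Omega (t - 1)"
    and "psub Gam 3"
    and "Omega \<inter> Gam = {0}"
    and "minimal_blocking_set Gam B"
    and "nontrivial_blocking_set Gam B"
    and "P \<in> proj_cone Omega B"
    and "\<not> P \<subseteq> Omega"
  shows "card {L. is_line L \<and> P \<subseteq> L \<and> points_of L \<subseteq> proj_cone Omega B}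
           = (CARD('k) ^ (t - 1) - 1) div (CARD('k) - 1)"
proof -
  have Om: "vec.subspace Omega" "vec.dim Omega = t - 1" and Gam: "vec.subspace Gam"
    using assms(2,3) by (auto simp: psub_def)
  have B: "B \<subseteq> points_of Gam" using assms(5) by (simp add: minimal_blocking_set_def blocking_set_def)
  have no_line: "\<not> (\<exists>M. is_line M \<and> M \<subseteq> Gam \<and> points_of M \<subseteq> B)"
    using assms(6) by (simp add: nontrivial_blocking_set_def)
  obtain Q where Q: "Q \<in> B" "P \<in> points_of (vec.span (Q \<union> Omega))"
    using assms(7) by (auto simp: proj_cone_def)
  then obtain p where p: "p \<noteq> 0" "P = vec.span {p}" by (auto simp: points_of_def elim: is_pointE)
  have "p \<in> P" using p(2) vec.span_base by blast
  then have "p \<in> vec.span (Q \<union> Omega)" using Q(2) by (auto simp: points_of_def)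
  have "p \<notin> Omega" using p(2) assms(8) vec.span_minimal[of "{p}" Omega] Om(1) by auto
  have "P \<subseteq> L \<longleftrightarrow> p \<in> L" if "is_line L" for L
    using that p(2) vec.span_minimal[of "{p}" L] \<open>p \<in> P\<close> by (auto simp: is_line_def psub_def)
  then have "{L. is_line L \<and> P \<subseteq> L \<and> points_of L \<subseteq> proj_cone Omega B}
      = {L. is_line L \<and> p \<in> L \<and> L \<subseteq> vec.span (insert p Omega)}"
    using line_in_proj_cone_iff[OF Om(1) Gam assms(4) B no_line Q(1) \<open>p \<in> vec.span (Q \<union> Omega)\<close>
        \<open>p \<notin> Omega\<close>]
    by blast
  with \<open>p \<notin> Omega\<close> show ?thesis
    using card_lines_through_in_join[OF Om(1)] card_points_of[OF Om(1)] Om(2) by simp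
qed

end
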